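(* Let $G$ be a graph on $n$ nodes with $m$ edges, let $k\in\{1,\dots,n-1\}$, and let $T$ be a threshold graph on $n$ nodes with $m$ edges such that $\sum_{i=1}^k\lambda_i(T)\ge\sum_{i=1}^k\lambda_i(G)$. Then the complement graphs $\bar G$ and $\bar T$ satisfy $\sum_{i=1}^{n-k-1}\lambda_i(\bar T)\ge\sum_{i=1}^{n-k-1}\lambda_i(\bar G)$. Moreover, every threshold graph $T$ on $n$ nodes with $m$ edges satisfies $\sum_{i=1}^{n-1}\lambda_i(\bar T)=\sum_{i=1}^{n-1}\lambda_i(\bar G)$.
   Context: All graphs are finite and simple; $\bar H$ denotes the complement of a graph $H$. For a graph $G$ on $n$ nodes, the Laplacian eigenvalues (eigenvalues of $L(G)=D(G)-A(G)$) are $\lambda_1(G)\ge\dots\ge\lambda_n(G)=0$. A threshold graph is a graph obtainable from the empty graph by repeatedly adding a new node that is either isolated or adjacent to all previously added nodes. *)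

theory Defs
  imports "Jordan_Normal_Form.Char_Poly" "HOL-Library.Multiset" "HOL-Combinatorics.Permutations"
begin

definition simple_graph :: "nat \<Rightarrow> (nat \<Rightarrow> nat \<Rightarrow> bool) \<Rightarrow> bool" where
  "simple_graph n E \<longleftrightarrow> (\<forall>i j. E i j \<longrightarrow> i < n \<and> j < n \<and> i \<noteq> j \<and> E j i)"

definition num_edges :: "nat \<Rightarrow> (nat \<Rightarrow> nat \<Rightarrow> bool) \<Rightarrow> nat" where
  "num_edges n E = card {(i, j). i < j \<and> j < n \<and> E i j}"

definition compl_graph :: "nat \<Rightarrow> (nat \<Rightarrow> nat \<Rightarrow> bool) \<Rightarrow> (nat \<Rightarrow> nat \<Rightarrow> bool)" where
  "compl_graph n E = (\<lambda>i j. i < n \<and> j < n \<and> i \<noteq> j \<and> \<not> E i j)"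

definition degree :: "nat \<Rightarrow> (nat \<Rightarrow> nat \<Rightarrow> bool) \<Rightarrow> nat \<Rightarrow> nat" where
  "degree n E i = card {j. j < n \<and> E i j}"

definition laplacian :: "nat \<Rightarrow> (nat \<Rightarrow> nat \<Rightarrow> bool) \<Rightarrow> real mat" where
  "laplacian n E = mat n n (\<lambda>(i, j). (if i = j then real (degree n E i) else 0)
                                     - (if E i j then 1 else 0))"

definition eig_mset :: "real mat \<Rightarrow> real multiset" where
  "eig_mset A = Abs_multiset (\<lambda>x. order x (char_poly A))"

text \<open>lam A i = i-th largest eigenvalue (1-based), lambda_1 >= ... >= lambda_n.\<close>
definition lam :: "real mat \<Rightarrow> nat \<Rightarrow> real" where
  "lam A i = rev (sorted_list_of_multiset (eig_mset A)) ! (i - 1)"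

definition lap_eig :: "nat \<Rightarrow> (nat \<Rightarrow> nat \<Rightarrow> bool) \<Rightarrow> nat \<Rightarrow> real" where
  "lap_eig n E i = lam (laplacian n E) i"

inductive threshold_built :: "nat \<Rightarrow> (nat \<Rightarrow> nat \<Rightarrow> bool) \<Rightarrow> bool" where
  empty: "threshold_built 0 (\<lambda>_ _. False)"
| isolated: "threshold_built n E \<Longrightarrow> threshold_built (Suc n) E"
| dominating: "threshold_built n E \<Longrightarrow>
     threshold_built (Suc n) (\<lambda>i j. E i j \<or> (i = n \<and> j < n) \<or> (j = n \<and> i < n))"

definition threshold_graph :: "nat \<Rightarrow> (nat \<Rightarrow> nat \<Rightarrow> bool) \<Rightarrow> bool" where
  "threshold_graph n E \<longleftrightarrow> simple_graph n E \<and>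
     (\<exists>\<pi>. \<pi> permutes {0..<n} \<and> threshold_built n (\<lambda>i j. E (\<pi> i) (\<pi> j)))"

end

theory Submission
  imports Defs "Jordan_Normal_Form.Schur_Decomposition"
begin

text \<open>The Laplacian of the complement is L(co G) = n I - J - L(G), where J is the all-ones
  matrix, and L(G) annihilates the all-ones vector. Evaluating det (x I - L(co G)) with row
  operations shows that, as multisets, {n} + spec L(co G) = {0} + {n - mu. mu in spec L(G)}.
  Laplacian eigenvalues are nonnegative and include 0, hence lambda_i(co G) = n - lambda_(n-i)(G)
  for 0 < i < n, and summing gives
  lambda_1(co G) + ... + lambda_(n-k-1)(co G) = n (n-k-1) - 2 m + lambda_1(G) + ... + lambda_k(G).
  The right-hand side depends on G only through m and the sum of its k largest eigenvalues, which
  gives the inequality; the equality is the case k = 0.\<close>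

lemma order_prod_list_linear:
  "Polynomial.order x (\<Prod>r\<leftarrow>rs. [:-r, 1:]) = count (mset rs) (x :: 'a :: idom)"
proof (induction rs)
  case Nil
  then show ?case by (simp add: order_0I)
next
  case (Cons r rs)
  have nz: "(\<Prod>r\<leftarrow>rs. [:-r, 1:]) \<noteq> (0 :: 'a poly)"
    by (auto simp add: prod_list_zero_iff)
  have "Polynomial.order x (\<Prod>r\<leftarrow>r # rs. [:-r, 1:])
      = Polynomial.order x ([:-r, 1:] * (\<Prod>r\<leftarrow>rs. [:-r, 1:]))"
    by simp
  also have "\<dots> = Polynomial.order x [:-r, 1:] + Polynomial.order x (\<Prod>r\<leftarrow>rs. [:-r, 1:])"
    by (rule order_mult) (rule no_zero_divisors, simp, rule nz)
  finally show ?case using Cons by (simp add: order_linear')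
qed

lemma mset_eq_if_prod_list_linear_eq:
  assumes "(\<Prod>r\<leftarrow>rs. [:-r, 1:]) = (\<Prod>r\<leftarrow>ss. [:-r, 1:] :: 'a :: idom poly)"
  shows "mset rs = mset ss"
  by (rule multiset_eqI) (metis assms order_prod_list_linear)

lemma eig_mset_eq_mset:
  assumes "char_poly A = (\<Prod>r\<leftarrow>rs. [:-r, 1:])"
  shows "eig_mset A = mset rs"
proof -
  have "(\<lambda>x. Polynomial.order x (char_poly A)) = count (mset rs)"
    using assms order_prod_list_linear by auto
  then show ?thesis unfolding eig_mset_def by (simp add: count_inverse)
qed

lemma prod_list_map_upt: "prod_list (map f [0..<n]) = (\<Prod>i<n. f i :: 'a :: comm_monoid_mult)"
  by (induction n) (simp_all add: mult.commute)

lemma prod_list_map_diff_swap: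
  "(-1) ^ length rs * (\<Prod>r\<leftarrow>rs. a - r) = (\<Prod>r\<leftarrow>rs. r - a :: 'a :: comm_ring_1)"
  by (induction rs) (auto simp: algebra_simps)

subsection \<open>Eigenvalues of real symmetric matrices\<close>

lemma mult_mat_vec_index:
  assumes "A \<in> carrier_mat n n" "v \<in> carrier_vec n" "i < n"
  shows "(A *\<^sub>v v) $ i = (\<Sum>j<n. A $$ (i, j) * v $ j)"
  using assms by (auto simp: scalar_prod_def lessThan_atLeast0 intro!: sum.cong)

lemma sum_norm_sq_pos_if_nonzero:
  fixes v :: "'a :: real_normed_vector vec"
  assumes "v \<in> carrier_vec n" "v \<noteq> 0\<^sub>v n"
  shows "(\<Sum>i<n. (norm (v $ i))\<^sup>2) > 0"
proof -
  obtain i where i: "i < n" "v $ i \<noteq> 0"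
    using assms by (metis eq_vecI carrier_vecD index_zero_vec)
  have "(norm (v $ i))\<^sup>2 \<le> (\<Sum>j<n. (norm (v $ j))\<^sup>2)"
    by (rule member_le_sum) (use i in auto)
  moreover have "(norm (v $ i))\<^sup>2 > 0" using i by simp
  ultimately show ?thesis by linarith
qed

lemma char_poly_root_eigenvectorE:
  fixes A :: "'a :: field mat"
  assumes "A \<in> carrier_mat n n" "char_poly A = (\<Prod>a\<leftarrow>as. [:-a, 1:])" "a \<in> set as"
  obtains v where "v \<in> carrier_vec n" "v \<noteq> 0\<^sub>v n" "A *\<^sub>v v = a \<cdot>\<^sub>v v"
proof -
  have "poly (char_poly A) a = 0" using assms(3) unfolding assms(2) by (rule linear_poly_root)
  then have "eigenvalue A a" using eigenvalue_root_char_poly[OF assms(1)] by simp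
  then show ?thesis using that assms(1) unfolding eigenvalue_def eigenvector_def by auto
qed

text \<open>The Hermitian form v* A v equals a |v|^2 and is real because A is real symmetric.\<close>
lemma symmetric_real_mat_eigenvalue_real:
  fixes A :: "real mat"
  assumes A: "A \<in> carrier_mat n n"
    and A_sym: "\<And>i j. i < n \<Longrightarrow> j < n \<Longrightarrow> A $$ (i, j) = A $$ (j, i)"
    and v: "v \<in> carrier_vec n" "v \<noteq> 0\<^sub>v n" and ev: "map_mat of_real A *\<^sub>v v = a \<cdot>\<^sub>v v"
  shows "Im a = 0"
proof -
  define f where "f i = v $ i" for i
  have eq: "(\<Sum>j<n. of_real (A $$ (i, j)) * f j) = a * f i" if "i < n" for i
  proof -
    have "(map_mat of_real A *\<^sub>v v) $ i = (a \<cdot>\<^sub>v v) $ i" using ev by simp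
    then show ?thesis using that A v unfolding f_def
      by (auto simp: scalar_prod_def lessThan_atLeast0 intro!: sum.cong)
  qed
  define q where "q = (\<Sum>i<n. cnj (f i) * (\<Sum>j<n. of_real (A $$ (i, j)) * f j))"
  have "q = (\<Sum>i<n. a * (cnj (f i) * f i))" unfolding q_def using eq
    by (auto intro!: sum.cong)
  also have "\<dots> = a * (\<Sum>i<n. of_real ((norm (f i))\<^sup>2))"
  proof -
    have "\<And>z. z * cnj z = (complex_of_real (norm z))\<^sup>2"
      by (metis complex_norm_square of_real_power)
    then show ?thesis by (auto simp add: sum_distrib_left mult.commute intro!: sum.cong)
  qed
  finally have q_eq: "q = a * of_real (\<Sum>i<n. (norm (v $ i))\<^sup>2)" by (simp add: f_def)
  have "cnj q = (\<Sum>i<n. \<Sum>j<n. of_real (A $$ (i, j)) * f i * cnj (f j))"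
    unfolding q_def by (simp add: sum_distrib_left mult_ac)
  also have "\<dots> = (\<Sum>j<n. \<Sum>i<n. of_real (A $$ (i, j)) * f i * cnj (f j))"
    by (rule sum.swap)
  also have "\<dots> = (\<Sum>j<n. \<Sum>i<n. of_real (A $$ (j, i)) * cnj (f j) * f i)"
    using A_sym by (auto intro!: sum.cong simp: mult_ac)
  also have "\<dots> = q" unfolding q_def by (simp add: sum_distrib_left mult_ac)
  finally have "Im q = 0" by (metis complex_cnj_cancel_iff Reals_cnj_iff complex_is_Real_iff)
  then show ?thesis using q_eq sum_norm_sq_pos_if_nonzero[OF v] by simp
qed

lemma symmetric_real_mat_char_poly_splits:
  fixes A :: "real mat"
  assumes A: "A \<in> carrier_mat n n"
    and A_sym: "\<And>i j. i < n \<Longrightarrow> j < n \<Longrightarrow> A $$ (i, j) = A $$ (j, i)"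
  obtains rs where "char_poly A = (\<Prod>r\<leftarrow>rs. [:-r, 1:])" "length rs = n"
proof -
  interpret of_real_poly: map_poly_inj_comm_ring_hom "of_real :: real \<Rightarrow> complex"
    by unfold_locales
  let ?Ac = "map_mat complex_of_real A"
  have Ac: "?Ac \<in> carrier_mat n n" using A by simp
  obtain as where cas: "char_poly ?Ac = (\<Prod>a\<leftarrow>as. [:-a, 1:])" and len: "length as = n"
    using char_poly_factorized[OF Ac] by blast
  have real: "Im a = 0" if a: "a \<in> set as" for a
  proof -
    obtain v where "v \<in> carrier_vec n" "v \<noteq> 0\<^sub>v n" "?Ac *\<^sub>v v = a \<cdot>\<^sub>v v"
      by (rule char_poly_root_eigenvectorE[OF Ac cas a])
    then show ?thesis using symmetric_real_mat_eigenvalue_real[OF A A_sym] by blast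
  qed
  define rs where "rs = map Re as"
  have as_eq: "as = map complex_of_real rs" unfolding rs_def using real
    by (induction as) (auto simp: complex_eq_iff)
  have "map_poly complex_of_real (char_poly A) = char_poly ?Ac"
    using A by (rule sym[OF of_real_hom.char_poly_hom])
  also have "\<dots> = map_poly complex_of_real (\<Prod>r\<leftarrow>rs. [:-r, 1:])"
    unfolding cas as_eq by (simp add: of_real_poly.hom_prod_list o_def)
  finally have "char_poly A = (\<Prod>r\<leftarrow>rs. [:-r, 1:])" by (rule of_real_poly.injectivity)
  moreover have "length rs = n" using len rs_def by simp
  ultimately show ?thesis using that by blast
qed

definition trace :: "'a :: comm_ring_1 mat \<Rightarrow> 'a" where
  "trace A = (\<Sum>i<dim_row A. A $$ (i, i))"

lemma trace_mult_eq_sum: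
  assumes "X \<in> carrier_mat n m" "Y \<in> carrier_mat m n"
  shows "trace (X * Y) = (\<Sum>i<n. \<Sum>k<m. X $$ (i, k) * Y $$ (k, i))"
  using assms unfolding trace_def
  by (auto simp: scalar_prod_def lessThan_atLeast0 intro!: sum.cong)

lemma trace_mult_commute:
  assumes "X \<in> carrier_mat n m" "Y \<in> carrier_mat m n"
  shows "trace (X * Y) = trace (Y * X)"
proof -
  have "trace (X * Y) = (\<Sum>i<n. \<Sum>k<m. X $$ (i, k) * Y $$ (k, i))"
    by (rule trace_mult_eq_sum[OF assms])
  also have "\<dots> = (\<Sum>k<m. \<Sum>i<n. Y $$ (k, i) * X $$ (i, k))"
    by (subst sum.swap) (simp add: mult.commute)
  also have "\<dots> = trace (Y * X)"
    by (rule trace_mult_eq_sum[OF assms(2,1), symmetric])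
  finally show ?thesis .
qed

lemma trace_similar_mat_wit:
  assumes "A \<in> carrier_mat n n" "similar_mat_wit A B P Q"
  shows "trace A = trace B"
proof -
  note QP = similar_mat_witD2(2)[OF assms] and A_eq = similar_mat_witD2(3)[OF assms]
    and B = similar_mat_witD2(5)[OF assms] and P = similar_mat_witD2(6)[OF assms]
    and Q = similar_mat_witD2(7)[OF assms]
  have "trace A = trace ((P * B) * Q)" using A_eq by simp
  also have "\<dots> = trace (Q * (P * B))"
    by (rule trace_mult_commute[where n=n and m=n]) (use P B Q in auto)
  also have "Q * (P * B) = (Q * P) * B" using P B Q by (simp add: assoc_mult_mat)
  also have "\<dots> = B" using QP B by simp
  finally show ?thesis .
qed

lemma trace_eq_sum_list_roots:
  fixes A :: "'a :: conjugatable_ordered_field mat"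
  assumes A: "A \<in> carrier_mat n n" and c: "char_poly A = (\<Prod>r\<leftarrow>rs. [:-r, 1:])"
  shows "trace A = sum_list rs"
proof -
  obtain B P Q where "schur_decomposition A rs = (B, P, Q)"
    by (cases "schur_decomposition A rs") auto
  from schur_decomposition[OF A c this]
  have sim: "similar_mat_wit A B P Q" and diag: "diag_mat B = rs" by auto
  have "trace A = trace B" by (rule trace_similar_mat_wit[OF A sim])
  also have "\<dots> = sum_list (diag_mat B)"
    using similar_mat_witD2(5)[OF A sim] unfolding trace_def diag_mat_def
    by (simp add: sum_list_sum_nth lessThan_atLeast0)
  finally show ?thesis unfolding diag .
qed

subsection \<open>Adding the all-ones matrix to a matrix with constant column sums\<close>

definition add_rows_to_first :: "nat \<Rightarrow> 'a :: comm_ring_1 mat" where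
  "add_rows_to_first n = mat n n (\<lambda>(i, j). if i = 0 \<or> i = j then 1 else 0)"

definition scale_first_row :: "nat \<Rightarrow> 'a :: comm_ring_1 \<Rightarrow> 'a mat" where
  "scale_first_row n c = mat n n (\<lambda>(i, j). if i = j then (if i = 0 then c else 1) else 0)"

definition sub_first_row :: "nat \<Rightarrow> 'a :: comm_ring_1 mat" where
  "sub_first_row n = mat n n (\<lambda>(i, j). if i = j then 1 else if j = 0 then -1 else 0)"

lemma elementary_mats_carrier [simp]:
  "add_rows_to_first n \<in> carrier_mat n n" "scale_first_row n c \<in> carrier_mat n n"
  "sub_first_row n \<in> carrier_mat n n"
  unfolding add_rows_to_first_def scale_first_row_def sub_first_row_def by auto

lemma elementary_mats_dim [simp]:
  "dim_row (add_rows_to_first n) = n" "dim_col (add_rows_to_first n) = n"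
  "dim_row (scale_first_row n c) = n" "dim_col (scale_first_row n c) = n"
  "dim_row (sub_first_row n) = n" "dim_col (sub_first_row n) = n"
  unfolding add_rows_to_first_def scale_first_row_def sub_first_row_def by auto

lemma index_mult_mat_sum:
  assumes "A \<in> carrier_mat n n" "B \<in> carrier_mat n n" "i < n" "j < n"
  shows "(A * B) $$ (i, j) = (\<Sum>k<n. A $$ (i, k) * B $$ (k, j))"
  using assms by (simp add: scalar_prod_def lessThan_atLeast0)

lemma add_rows_to_first_mult:
  assumes X: "X \<in> carrier_mat n n" and ij: "i < n" "j < n"
  shows "(add_rows_to_first n * X) $$ (i, j) = (if i = 0 then (\<Sum>k<n. X $$ (k, j)) else X $$ (i, j))"
proof -
  have "(add_rows_to_first n * X) $$ (i, j) = (\<Sum>k<n. add_rows_to_first n $$ (i, k) * X $$ (k, j))"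
    by (rule index_mult_mat_sum[OF _ X ij]) simp
  also have "\<dots> = (\<Sum>k<n. if i = 0 then X $$ (k, j) else if k = i then X $$ (i, j) else 0)"
    by (rule sum.cong) (use ij in \<open>auto simp: add_rows_to_first_def\<close>)
  finally show ?thesis using ij by simp
qed

lemma scale_first_row_mult:
  assumes X: "X \<in> carrier_mat n n" and ij: "i < n" "j < n"
  shows "(scale_first_row n c * X) $$ (i, j) = (if i = 0 then c else 1) * X $$ (i, j)"
proof -
  have "(scale_first_row n c * X) $$ (i, j) = (\<Sum>k<n. scale_first_row n c $$ (i, k) * X $$ (k, j))"
    by (rule index_mult_mat_sum[OF _ X ij]) simp
  also have "\<dots> = (\<Sum>k<n. if k = i then (if i = 0 then c else 1) * X $$ (i, j) else 0)"
    by (rule sum.cong) (use ij in \<open>auto simp: scale_first_row_def\<close>)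
  finally show ?thesis using ij by simp
qed

lemma sub_first_row_mult:
  assumes X: "X \<in> carrier_mat n n" and ij: "i < n" "j < n"
  shows "(sub_first_row n * X) $$ (i, j) = (if i = 0 then X $$ (0, j) else X $$ (i, j) - X $$ (0, j))"
proof -
  have "(sub_first_row n * X) $$ (i, j) = (\<Sum>k<n. sub_first_row n $$ (i, k) * X $$ (k, j))"
    by (rule index_mult_mat_sum[OF _ X ij]) simp
  also have "\<dots> = (\<Sum>k<n. (if k = i then X $$ (i, j) else 0) + (if i \<noteq> 0 \<and> k = 0 then - X $$ (0, j) else 0))"
    by (rule sum.cong) (use ij in \<open>auto simp: sub_first_row_def\<close>)
  also have "\<dots> = (if i = 0 then X $$ (0, j) else X $$ (i, j) - X $$ (0, j))"
    using ij by (auto simp: sum.distrib)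
  finally show ?thesis .
qed

lemma det_elementary_mats:
  assumes "0 < n"
  shows "det (add_rows_to_first n :: 'a :: comm_ring_1 mat) = 1"
    and "det (scale_first_row n c) = c"
    and "det (sub_first_row n :: 'a mat) = 1"
proof -
  show "det (add_rows_to_first n :: 'a mat) = 1"
    by (subst det_upper_triangular[OF _ elementary_mats_carrier(1)])
       (auto simp: upper_triangular_def add_rows_to_first_def diag_mat_def prod_list_map_upt)
  have "det (scale_first_row n c) = (\<Prod>i<n. if i = 0 then c else 1)"
    by (subst det_upper_triangular[OF _ elementary_mats_carrier(2)])
       (auto simp: upper_triangular_def scale_first_row_def diag_mat_def prod_list_map_upt
             intro!: prod.cong)
  then show "det (scale_first_row n c) = c" using assms by (simp add: prod.delta)
  show "det (sub_first_row n :: 'a mat) = 1"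
    by (subst det_lower_triangular[OF _ elementary_mats_carrier(3)])
       (auto simp: sub_first_row_def diag_mat_def prod_list_map_upt)
qed

text \<open>Adding all rows to the first one turns the first rows of K and K + J into constant rows
  y and y + n; the remaining rows of K + J exceed those of K by the first row, which is then
  all ones after factoring out the constant.\<close>
lemma det_add_all_ones:
  fixes K :: "'a :: comm_ring_1 mat"
  assumes K: "K \<in> carrier_mat n n" and n: "0 < n"
    and col_sums: "\<And>j. j < n \<Longrightarrow> (\<Sum>i<n. K $$ (i, j)) = y"
  shows "y * det (K + mat n n (\<lambda>_. 1)) = (y + of_nat n) * det K"
proof -
  define J :: "'a mat" where "J = mat n n (\<lambda>_. 1)"
  define N :: "'a mat" where "N = mat n n (\<lambda>(i, j). if i = 0 then 1 else K $$ (i, j))"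
  define N' :: "'a mat" where "N' = mat n n (\<lambda>(i, j). if i = 0 then 1 else K $$ (i, j) + 1)"
  have N: "N \<in> carrier_mat n n" "N' \<in> carrier_mat n n" unfolding N_def N'_def by auto
  have KJ: "K + J \<in> carrier_mat n n" using K unfolding J_def by simp
  have col_sums_J: "(\<Sum>k<n. (K + J) $$ (k, j)) = y + of_nat n" if j: "j < n" for j
  proof -
    have "(\<Sum>k<n. (K + J) $$ (k, j)) = (\<Sum>k<n. K $$ (k, j) + 1)"
      by (rule sum.cong) (use j K in \<open>auto simp: J_def\<close>)
    then show ?thesis using col_sums[OF j] by (simp add: sum.distrib)
  qed
  have row_ops_K: "add_rows_to_first n * K = scale_first_row n y * N"
  proof (rule eq_matI)
    fix i j assume "i < dim_row (scale_first_row n y * N)" "j < dim_col (scale_first_row n y * N)"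
    then have ij: "i < n" "j < n" using N by auto
    show "(add_rows_to_first n * K) $$ (i, j) = (scale_first_row n y * N) $$ (i, j)"
      unfolding add_rows_to_first_mult[OF K ij] scale_first_row_mult[OF N(1) ij]
      using ij col_sums[OF ij(2)] by (simp add: N_def)
  qed (use K N in auto)
  have row_ops_KJ: "add_rows_to_first n * (K + J) = scale_first_row n (y + of_nat n) * N'"
  proof (rule eq_matI)
    fix i j
    assume "i < dim_row (scale_first_row n (y + of_nat n) * N')"
      "j < dim_col (scale_first_row n (y + of_nat n) * N')"
    then have ij: "i < n" "j < n" using N by auto
    show "(add_rows_to_first n * (K + J)) $$ (i, j) = (scale_first_row n (y + of_nat n) * N') $$ (i, j)"
      unfolding add_rows_to_first_mult[OF KJ ij] scale_first_row_mult[OF N(2) ij]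
      using ij col_sums_J[OF ij(2)] K by (simp add: N'_def J_def)
  qed (use KJ N in auto)
  have row_ops_N': "sub_first_row n * N' = N"
  proof (rule eq_matI)
    fix i j assume "i < dim_row N" "j < dim_col N"
    then have ij: "i < n" "j < n" using N by auto
    show "(sub_first_row n * N') $$ (i, j) = N $$ (i, j)"
      unfolding sub_first_row_mult[OF N(2) ij] using ij n by (simp add: N_def N'_def)
  qed (use N in auto)
  have "det K = det (add_rows_to_first n * K)"
    using det_mult[OF elementary_mats_carrier(1) K] by (simp add: det_elementary_mats[OF n])
  also have "\<dots> = y * det N"
    unfolding row_ops_K using det_mult[OF elementary_mats_carrier(2) N(1)]
    by (simp add: det_elementary_mats[OF n])
  finally have det_K: "det K = y * det N" .
  have "det (K + J) = det (add_rows_to_first n * (K + J))"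
    using det_mult[OF elementary_mats_carrier(1) KJ] by (simp add: det_elementary_mats[OF n])
  also have "\<dots> = (y + of_nat n) * det N'"
    unfolding row_ops_KJ using det_mult[OF elementary_mats_carrier(2) N(2)]
    by (simp add: det_elementary_mats[OF n])
  also have "det N' = det N"
    using row_ops_N' det_mult[OF elementary_mats_carrier(3) N(2)]
    by (simp add: det_elementary_mats[OF n])
  finally have "det (K + J) = (y + of_nat n) * det N" .
  then show ?thesis using det_K unfolding J_def by (simp add: mult_ac)
qed

definition adj :: "(nat \<Rightarrow> nat \<Rightarrow> bool) \<Rightarrow> nat \<Rightarrow> nat \<Rightarrow> real" where
  "adj E i j = (if E i j then 1 else 0)"

lemma degree_eq_sum_adj: "real (degree n E i) = (\<Sum>j<n. adj E i j)"
proof -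
  have "(\<Sum>j<n. adj E i j) = (\<Sum>j\<in>{j\<in>{..<n}. E i j}. 1)"
    unfolding adj_def by (rule sum.inter_filter[symmetric]) simp
  also have "\<dots> = real (degree n E i)" unfolding degree_def by simp
  finally show ?thesis by simp
qed

lemma laplacian_carrier [simp]: "laplacian n E \<in> carrier_mat n n"
  unfolding laplacian_def by simp

lemma laplacian_dim [simp]: "dim_row (laplacian n E) = n" "dim_col (laplacian n E) = n"
  unfolding laplacian_def by simp_all

lemma laplacian_index:
  "i < n \<Longrightarrow> j < n \<Longrightarrow>
    laplacian n E $$ (i, j) = (if i = j then (\<Sum>k<n. adj E i k) else 0) - adj E i j"
  unfolding laplacian_def by (simp add: degree_eq_sum_adj adj_def)

lemma adj_commute: "simple_graph n E \<Longrightarrow> adj E i j = adj E j i"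
  unfolding simple_graph_def adj_def by metis

lemma adj_self: "simple_graph n E \<Longrightarrow> adj E i i = 0"
  unfolding simple_graph_def adj_def by auto

lemma laplacian_symmetric:
  "simple_graph n E \<Longrightarrow> i < n \<Longrightarrow> j < n \<Longrightarrow> laplacian n E $$ (i, j) = laplacian n E $$ (j, i)"
  by (simp add: laplacian_index adj_commute)

lemma laplacian_row_mult:
  assumes "i < n"
  shows "(\<Sum>j<n. laplacian n E $$ (i, j) * v j)
    = (\<Sum>k<n. adj E i k) * v i - (\<Sum>j<n. adj E i j * v j)"
proof -
  have "(\<Sum>j<n. laplacian n E $$ (i, j) * v j)
      = (\<Sum>j<n. (if i = j then (\<Sum>k<n. adj E i k) * v j else 0) - adj E i j * v j)"
    using assms by (intro sum.cong) (auto simp: laplacian_index algebra_simps)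
  also have "\<dots> = (\<Sum>k<n. adj E i k) * v i - (\<Sum>j<n. adj E i j * v j)"
    using assms by (simp add: sum_subtractf sum.delta)
  finally show ?thesis .
qed

lemma laplacian_row_sum:
  assumes "i < n"
  shows "(\<Sum>j<n. laplacian n E $$ (i, j)) = 0"
  using laplacian_row_mult[OF assms, of E "\<lambda>_. 1"] by simp

lemma laplacian_col_sum:
  assumes "simple_graph n E" "j < n"
  shows "(\<Sum>i<n. laplacian n E $$ (i, j)) = 0"
  using laplacian_row_sum[OF assms(2)] laplacian_symmetric[OF assms(1) _ assms(2)]
  by (metis (no_types, lifting) lessThan_iff sum.cong)

lemma laplacian_quadratic_form:
  assumes E: "simple_graph n E"
  shows "2 * (\<Sum>i<n. v i * (\<Sum>j<n. laplacian n E $$ (i, j) * v j))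
       = (\<Sum>i<n. \<Sum>j<n. adj E i j * (v i - v j)\<^sup>2)"
proof -
  have "(\<Sum>i<n. v i * (\<Sum>j<n. laplacian n E $$ (i, j) * v j))
      = (\<Sum>i<n. (\<Sum>j<n. adj E i j * (v i)\<^sup>2) - (\<Sum>j<n. adj E i j * v i * v j))"
  proof (rule sum.cong[OF refl])
    fix i assume "i \<in> {..<n}"
    then have i: "i < n" by simp
    have "(\<Sum>j<n. adj E i j * (v i)\<^sup>2) = (\<Sum>k<n. adj E i k) * v i * v i"
      by (simp add: sum_distrib_right power2_eq_square mult.assoc)
    moreover have "(\<Sum>j<n. adj E i j * v i * v j) = v i * (\<Sum>j<n. adj E i j * v j)"
      by (simp add: sum_distrib_left mult_ac)
    ultimately show "v i * (\<Sum>j<n. laplacian n E $$ (i, j) * v j)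
        = (\<Sum>j<n. adj E i j * (v i)\<^sup>2) - (\<Sum>j<n. adj E i j * v i * v j)"
      unfolding laplacian_row_mult[OF i] by (simp add: algebra_simps)
  qed
  moreover have "(\<Sum>i<n. \<Sum>j<n. adj E i j * (v j)\<^sup>2) = (\<Sum>i<n. \<Sum>j<n. adj E i j * (v i)\<^sup>2)"
    by (subst sum.swap) (simp add: adj_commute[OF E])
  moreover have "(\<Sum>i<n. \<Sum>j<n. adj E i j * (v i - v j)\<^sup>2)
      = (\<Sum>i<n. \<Sum>j<n. adj E i j * (v i)\<^sup>2) + (\<Sum>i<n. \<Sum>j<n. adj E i j * (v j)\<^sup>2)
        - 2 * (\<Sum>i<n. \<Sum>j<n. adj E i j * v i * v j)"
    by (simp add: power2_diff algebra_simps sum.distrib sum_subtractf sum_distrib_left)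
  ultimately show ?thesis by (simp add: sum_subtractf)
qed

lemma laplacian_quadratic_form_nonneg:
  assumes "simple_graph n E"
  shows "(\<Sum>i<n. v i * (\<Sum>j<n. laplacian n E $$ (i, j) * v j)) \<ge> 0"
proof -
  have "(\<Sum>i<n. \<Sum>j<n. adj E i j * (v i - v j)\<^sup>2) \<ge> 0"
    by (intro sum_nonneg) (auto simp: adj_def)
  then show ?thesis using laplacian_quadratic_form[OF assms, of v] by simp
qed

lemma laplacian_char_poly_splits:
  assumes "simple_graph n E"
  obtains rs where "char_poly (laplacian n E) = (\<Prod>r\<leftarrow>rs. [:-r, 1:])" "length rs = n"
  using symmetric_real_mat_char_poly_splits[OF laplacian_carrier laplacian_symmetric[OF assms]]
  by blast

lemma laplacian_eigenvalue_nonneg: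
  assumes E: "simple_graph n E"
    and c: "char_poly (laplacian n E) = (\<Prod>r\<leftarrow>rs. [:-r, 1:])" and r: "r \<in> set rs"
  shows "r \<ge> 0"
proof -
  obtain v where v: "v \<in> carrier_vec n" "v \<noteq> 0\<^sub>v n" "laplacian n E *\<^sub>v v = r \<cdot>\<^sub>v v"
    by (rule char_poly_root_eigenvectorE[OF laplacian_carrier c r])
  have Lv: "(\<Sum>j<n. laplacian n E $$ (i, j) * v $ j) = r * v $ i" if "i < n" for i
  proof -
    have "(\<Sum>j<n. laplacian n E $$ (i, j) * v $ j) = (laplacian n E *\<^sub>v v) $ i"
      by (rule mult_mat_vec_index[OF laplacian_carrier v(1) that, symmetric])
    also have "\<dots> = r * v $ i" using v(1,3) that by (simp add: carrier_vecD)
    finally show ?thesis .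
  qed
  have "(\<Sum>i<n. v $ i * (\<Sum>j<n. laplacian n E $$ (i, j) * v $ j)) = (\<Sum>i<n. r * (v $ i)\<^sup>2)"
    using Lv by (auto intro!: sum.cong simp: power2_eq_square)
  then have "r * (\<Sum>i<n. (v $ i)\<^sup>2) \<ge> 0"
    using laplacian_quadratic_form_nonneg[OF E, of "\<lambda>i. v $ i"] by (simp add: sum_distrib_left)
  moreover have "(\<Sum>i<n. (v $ i)\<^sup>2) > 0"
    using sum_norm_sq_pos_if_nonzero[OF v(1,2)] by (simp add: real_norm_def)
  ultimately show ?thesis by (simp add: zero_le_mult_iff)
qed

lemma laplacian_eigenvalue_0:
  assumes n: "0 < n" and c: "char_poly (laplacian n E) = (\<Prod>r\<leftarrow>rs. [:-r, 1:])"
  shows "0 \<in> set rs"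
proof -
  let ?L = "laplacian n E" and ?one = "vec n (\<lambda>_. 1) :: real vec"
  have "?L *\<^sub>v ?one = 0 \<cdot>\<^sub>v ?one"
  proof (rule eq_vecI)
    fix i assume "i < dim_vec (0 \<cdot>\<^sub>v ?one)"
    then have i: "i < n" by simp
    have "(?L *\<^sub>v ?one) $ i = (\<Sum>j<n. ?L $$ (i, j))"
      using i by (simp add: scalar_prod_def lessThan_atLeast0)
    then show "(?L *\<^sub>v ?one) $ i = (0 \<cdot>\<^sub>v ?one) $ i" using laplacian_row_sum[OF i] i by simp
  qed simp
  moreover have "?one \<noteq> 0\<^sub>v n"
  proof
    assume "?one = 0\<^sub>v n"
    then have "?one $ 0 = (0\<^sub>v n :: real vec) $ 0" by simp
    then show False using n by simp
  qed
  ultimately have "eigenvector ?L ?one 0" unfolding eigenvector_def by simp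
  then have "eigenvalue ?L 0" unfolding eigenvalue_def by blast
  then have "poly (char_poly ?L) 0 = 0" using eigenvalue_root_char_poly[OF laplacian_carrier] by simp
  then show ?thesis unfolding c poly_prod_list_zero_iff by auto
qed

lemma sum_degree_eq_twice_num_edges:
  assumes E: "simple_graph n E"
  shows "(\<Sum>i<n. degree n E i) = 2 * num_edges n E"
proof -
  define P where "P = {(i, j). i < j \<and> j < n \<and> E i j}"
  have fin: "finite P" unfolding P_def
    by (rule finite_subset[of _ "{..<n} \<times> {..<n}"]) auto
  have "(\<Sum>i<n. degree n E i) = card (Sigma {..<n} (\<lambda>i. {j. j < n \<and> E i j}))"
    unfolding degree_def by (subst card_SigmaI) auto
  also have "Sigma {..<n} (\<lambda>i. {j. j < n \<and> E i j}) = P \<union> prod.swap ` P"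
    using E unfolding P_def simple_graph_def
    by (auto simp: image_iff) (metis linorder_neqE_nat)+
  also have "card (P \<union> prod.swap ` P) = card P + card (prod.swap ` P)"
    by (rule card_Un_disjoint) (use fin in \<open>auto simp: P_def\<close>)
  also have "card (prod.swap ` P) = card P" by (rule card_image) simp
  finally show ?thesis unfolding num_edges_def P_def by simp
qed

lemma trace_laplacian:
  assumes E: "simple_graph n E"
  shows "trace (laplacian n E) = 2 * real (num_edges n E)"
proof -
  have "trace (laplacian n E) = (\<Sum>i<n. real (degree n E i))"
    unfolding trace_def using adj_self[OF E]
    by (auto intro!: sum.cong simp: laplacian_index degree_eq_sum_adj)
  also have "\<dots> = real (\<Sum>i<n. degree n E i)" by simp
  also have "\<dots> = 2 * real (num_edges n E)" using sum_degree_eq_twice_num_edges[OF E] by simp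
  finally show ?thesis .
qed

subsection \<open>The Laplacian spectrum of the complement\<close>

lemma simple_graph_compl_graph: "simple_graph n E \<Longrightarrow> simple_graph n (compl_graph n E)"
  unfolding simple_graph_def compl_graph_def by metis

lemma degree_compl_graph:
  assumes E: "simple_graph n E" and i: "i < n"
  shows "real (degree n (compl_graph n E) i) = real n - 1 - real (degree n E i)"
proof -
  let ?A = "{j. j < n \<and> compl_graph n E i j}" and ?B = "{j. j < n \<and> E i j}"
  have "{..<n} = ?A \<union> ({i} \<union> ?B)" using i unfolding compl_graph_def by auto
  then have "n = card (?A \<union> ({i} \<union> ?B))" by (metis card_lessThan)
  also have "\<dots> = card ?A + card ({i} \<union> ?B)"
    by (rule card_Un_disjoint) (auto simp: compl_graph_def)
  also have "card ({i} \<union> ?B) = 1 + card ?B"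
    using E by (subst card_Un_disjoint) (auto simp: simple_graph_def)
  finally show ?thesis unfolding degree_def by simp
qed

text \<open>With K = L(G) - (n - x) I, whose column sums are x - n, we have
  x I - L(co G) = -(K + J), so the determinant identity for K + J relates the two
  characteristic polynomials.\<close>
lemma char_poly_compl_graph_eval:
  assumes E: "simple_graph n E" and n: "0 < n"
    and c: "char_poly (laplacian n E) = (\<Prod>r\<leftarrow>rs. [:-r, 1:])" and len: "length rs = n"
  shows "(x - real n) * poly (char_poly (laplacian n (compl_graph n E))) x
       = x * (\<Prod>r\<leftarrow>rs. x - (real n - r))"
proof -
  let ?L = "laplacian n E" and ?Lc = "laplacian n (compl_graph n E)"
  define K where "K = mat n n (\<lambda>(i, j). (if i = j then x - real n else 0) + ?L $$ (i, j))"
  have K: "K \<in> carrier_mat n n" unfolding K_def by simp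
  have col_sums: "(\<Sum>i<n. K $$ (i, j)) = x - real n" if j: "j < n" for j
  proof -
    have "(\<Sum>i<n. K $$ (i, j)) = (\<Sum>i<n. (if i = j then x - real n else 0) + ?L $$ (i, j))"
      by (rule sum.cong) (use j in \<open>auto simp: K_def\<close>)
    then show ?thesis using laplacian_col_sum[OF E j] j by (simp add: sum.distrib)
  qed
  have char_matrix_Lc: "- char_matrix ?Lc x = K + mat n n (\<lambda>_. 1)"
  proof (rule eq_matI)
    fix i j assume "i < dim_row (K + mat n n (\<lambda>_. 1))" "j < dim_col (K + mat n n (\<lambda>_. 1))"
    then have ij: "i < n" "j < n" using K by auto
    have "\<not> E i i" using E unfolding simple_graph_def by auto
    then show "(- char_matrix ?Lc x) $$ (i, j) = (K + mat n n (\<lambda>_. 1)) $$ (i, j)"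
      using ij K degree_compl_graph[OF E ij(1)]
      by (auto simp: char_matrix_def K_def laplacian_def compl_graph_def)
  qed (use K in \<open>auto simp: char_matrix_def\<close>)
  have "poly (char_poly ?Lc) x = det (K + mat n n (\<lambda>_. 1))"
    using char_poly_matrix[OF laplacian_carrier, of n "compl_graph n E" x] char_matrix_Lc by simp
  then have eval_Lc: "(x - real n) * poly (char_poly ?Lc) x = x * det K"
    using det_add_all_ones[OF K n col_sums] by simp
  have "char_matrix ?L (real n - x) = K"
    by (rule eq_matI) (auto simp: char_matrix_def K_def)
  then have "poly (char_poly ?L) (real n - x) = det (- K)"
    using char_poly_matrix[OF laplacian_carrier, of n E "real n - x"] by simp
  also have "- K = (-1) \<cdot>\<^sub>m K" by (rule eq_matI) (use K in auto)
  also have "det ((-1) \<cdot>\<^sub>m K) = (-1) ^ n * det K" using K by simp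
  finally have "det K = (-1) ^ n * poly (char_poly ?L) (real n - x)"
    by (simp add: power_mult_distrib[symmetric])
  also have "\<dots> = (-1) ^ length rs * (\<Prod>r\<leftarrow>rs. real n - x - r)"
    unfolding c len by (simp add: poly_prod_list o_def)
  also have "\<dots> = (\<Prod>r\<leftarrow>rs. r - (real n - x))"
    using prod_list_map_diff_swap[of rs "real n - x"] by (simp add: algebra_simps)
  finally show ?thesis using eval_Lc by (simp add: algebra_simps)
qed

lemma compl_graph_laplacian_roots:
  assumes E: "simple_graph n E" and n: "0 < n"
    and c: "char_poly (laplacian n E) = (\<Prod>r\<leftarrow>rs. [:-r, 1:])" and len: "length rs = n"
    and cc: "char_poly (laplacian n (compl_graph n E)) = (\<Prod>r\<leftarrow>rsc. [:-r, 1:])"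
  shows "mset (real n # rsc) = mset (0 # map (\<lambda>r. real n - r) rs)"
proof (rule mset_eq_if_prod_list_linear_eq)
  have "poly (\<Prod>r\<leftarrow>real n # rsc. [:-r, 1:]) x = poly (\<Prod>r\<leftarrow>0 # map (\<lambda>r. real n - r) rs. [:-r, 1:]) x"
    for x
  proof -
    have "(\<lambda>r. x - (real n - r)) = (\<lambda>r. r - real n + x)" by auto
    then show ?thesis
      using char_poly_compl_graph_eval[OF E n c len, of x] unfolding cc
      by (simp add: poly_prod_list o_def algebra_simps)
  qed
  then have "poly (\<Prod>r\<leftarrow>real n # rsc. [:-r, 1:]) = poly (\<Prod>r\<leftarrow>0 # map (\<lambda>r. real n - r) rs. [:-r, 1:])"
    by (rule ext)
  then show "(\<Prod>r\<leftarrow>real n # rsc. [:-r, 1:]) = (\<Prod>r\<leftarrow>0 # map (\<lambda>r. real n - r) rs. [:-r, 1:])"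
    by (simp only: poly_eq_poly_eq_iff)
qed

definition ith_largest :: "'a :: linorder list \<Rightarrow> nat \<Rightarrow> 'a" where
  "ith_largest xs i = rev (sort xs) ! (i - 1)"

lemma lam_eq_ith_largest:
  assumes "char_poly A = (\<Prod>r\<leftarrow>rs. [:-r, 1:])"
  shows "lam A i = ith_largest rs i"
  unfolding lam_def ith_largest_def eig_mset_eq_mset[OF assms] sorted_list_of_multiset_mset ..

lemma sum_ith_largest:
  "(\<Sum>i=1..length xs. ith_largest xs i) = sum_list (xs :: 'a :: {linorder, comm_monoid_add} list)"
proof -
  have "(\<Sum>i=1..length xs. ith_largest xs i) = (\<Sum>i<length xs. rev (sort xs) ! i)"
    unfolding ith_largest_def by (rule sum.reindex_bij_witness[where i=Suc and j="\<lambda>i. i - 1"]) auto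
  also have "\<dots> = sum_list (rev (sort xs))" by (simp add: sum_list_sum_nth lessThan_atLeast0)
  also have "\<dots> = sum_mset (mset (rev (sort xs)))" by (rule sum_mset_sum_list[symmetric])
  also have "\<dots> = sum_list xs" by (simp add: sum_mset_sum_list)
  finally show ?thesis .
qed

lemma sort_nth_0_eq_0:
  fixes xs :: "'a :: {linorder, zero} list"
  assumes nonneg: "\<forall>x\<in>set xs. 0 \<le> x" and zero: "0 \<in> set xs"
  shows "sort xs ! 0 = 0"
proof -
  obtain j where j: "j < length xs" "sort xs ! j = 0"
    using zero by (metis in_set_conv_nth length_sort set_sort)
  then have "sort xs ! 0 \<le> 0" by (metis sorted_nth_mono sorted_sort length_sort zero_le)
  moreover have "sort xs ! 0 \<in> set xs" using j by (metis gr_zeroI nth_mem length_sort set_sort not_less0)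
  ultimately show ?thesis using nonneg by (auto intro: order.antisym)
qed

lemma ith_largest_length_eq_0:
  fixes xs :: "'a :: {linorder, zero} list"
  assumes "\<forall>x\<in>set xs. 0 \<le> x" "0 \<in> set xs"
  shows "ith_largest xs (length xs) = 0"
proof -
  have "xs \<noteq> []" using assms(2) by auto
  then show ?thesis
    using sort_nth_0_eq_0[OF assms] by (simp add: ith_largest_def rev_nth)
qed

lemma sorted_rev_map_diff:
  "sorted xs \<Longrightarrow> sorted (rev (map (\<lambda>x. c - x) (xs :: 'a :: linordered_ab_group_add list)))"
  by (induction xs) (auto simp: sorted_append)

text \<open>The zero of xs stays at the bottom of ys, and x \<mapsto> c - x reverses the order of the
  remaining elements.\<close>
lemma ith_largest_reflect:
  fixes xs ys :: "'a :: linordered_ab_group_add list"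
  assumes ms: "mset (c # ys) = mset (0 # map (\<lambda>x. c - x) xs)"
    and xs: "\<forall>x\<in>set xs. 0 \<le> x" "0 \<in> set xs" and ys: "\<forall>y\<in>set ys. 0 \<le> y"
    and i: "0 < i" "i < length xs"
  shows "ith_largest ys i = c - ith_largest xs (length xs - i)"
proof -
  let ?f = "\<lambda>x. c - x"
  define as where "as = sort xs"
  have "as \<noteq> []" using xs(2) by (metis as_def empty_iff list.set(1) set_sort)
  then have as_cons: "as = 0 # tl as"
    using sort_nth_0_eq_0[OF xs] unfolding as_def[symmetric] by (cases as) auto
  have "add_mset c (mset ys) = add_mset 0 (image_mset ?f (mset xs))" using ms by simp
  also have "mset xs = add_mset 0 (mset (tl as))" by (metis as_cons as_def mset.simps(2) mset_sort)
  finally have "add_mset c (mset ys) = add_mset c (add_mset 0 (image_mset ?f (mset (tl as))))"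
    by (simp add: add_mset_commute)
  then have ms_ys: "mset (0 # rev (map ?f (tl as))) = mset ys" by simp
  have "sorted (rev (map ?f (tl as)))"
    using sorted_tl[of as] unfolding as_def by (simp add: sorted_rev_map_diff)
  moreover have "\<forall>y\<in>set (rev (map ?f (tl as))). 0 \<le> y"
    using ys ms_ys by (metis list.set_intros(2) set_mset_mset)
  ultimately have "sort ys = 0 # rev (map ?f (tl as))"
    using ms_ys by (intro properties_for_sort) auto
  then have "ith_largest ys i = (map ?f (tl as) @ [0]) ! (i - 1)"
    unfolding ith_largest_def by simp
  also have "\<dots> = c - tl as ! (i - 1)"
  proof -
    have "i - 1 < length (tl as)" using i by (simp add: as_def)
    then show ?thesis by (simp add: nth_append)
  qed
  also have "tl as ! (i - 1) = as ! i" using i(1) as_cons nth_Cons_pos by metis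
  also have "as ! i = ith_largest xs (length xs - i)"
    using i by (simp add: ith_largest_def as_def rev_nth)
  finally show ?thesis .
qed

subsection \<open>Sums of Laplacian eigenvalues of a graph and its complement\<close>

lemma lap_eig_compl_graph:
  assumes E: "simple_graph n E" and i: "0 < i" "i < n"
  shows "lap_eig n (compl_graph n E) i = real n - lap_eig n E (n - i)"
proof -
  obtain rs where c: "char_poly (laplacian n E) = (\<Prod>r\<leftarrow>rs. [:-r, 1:])" and len: "length rs = n"
    by (rule laplacian_char_poly_splits[OF E])
  obtain rsc where cc: "char_poly (laplacian n (compl_graph n E)) = (\<Prod>r\<leftarrow>rsc. [:-r, 1:])"
    by (rule laplacian_char_poly_splits[OF simple_graph_compl_graph[OF E]])
  have "mset (real n # rsc) = mset (0 # map (\<lambda>r. real n - r) rs)"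
    using i by (intro compl_graph_laplacian_roots[OF E _ c len cc]) simp
  then have "ith_largest rsc i = real n - ith_largest rs (length rs - i)"
    using laplacian_eigenvalue_nonneg[OF E c] laplacian_eigenvalue_0[OF _ c]
      laplacian_eigenvalue_nonneg[OF simple_graph_compl_graph[OF E] cc] i len
    by (intro ith_largest_reflect) auto
  then show ?thesis using len by (simp add: lap_eig_def lam_eq_ith_largest[OF c] lam_eq_ith_largest[OF cc])
qed

lemma sum_lap_eig:
  assumes E: "simple_graph n E"
  shows "(\<Sum>i=1..n. lap_eig n E i) = 2 * real (num_edges n E)"
proof -
  obtain rs where c: "char_poly (laplacian n E) = (\<Prod>r\<leftarrow>rs. [:-r, 1:])" and len: "length rs = n"
    by (rule laplacian_char_poly_splits[OF E])
  have "(\<Sum>i=1..n. lap_eig n E i) = sum_list rs"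
    using len sum_ith_largest[of rs] by (simp add: lap_eig_def lam_eq_ith_largest[OF c])
  also have "\<dots> = trace (laplacian n E)" by (rule trace_eq_sum_list_roots[OF laplacian_carrier c, symmetric])
  also have "\<dots> = 2 * real (num_edges n E)" by (rule trace_laplacian[OF E])
  finally show ?thesis .
qed

lemma lap_eig_last:
  assumes E: "simple_graph n E" and n: "0 < n"
  shows "lap_eig n E n = 0"
proof -
  obtain rs where c: "char_poly (laplacian n E) = (\<Prod>r\<leftarrow>rs. [:-r, 1:])" and len: "length rs = n"
    by (rule laplacian_char_poly_splits[OF E])
  have "ith_largest rs (length rs) = 0"
    using laplacian_eigenvalue_nonneg[OF E c] laplacian_eigenvalue_0[OF n c]
    by (intro ith_largest_length_eq_0) auto
  then show ?thesis using len by (simp add: lap_eig_def lam_eq_ith_largest[OF c])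
qed

lemma sum_lap_eig_compl_graph:
  assumes E: "simple_graph n E" and k: "k < n"
  shows "(\<Sum>i=1..n-k-1. lap_eig n (compl_graph n E) i)
     = real n * real (n - k - 1) - 2 * real (num_edges n E) + (\<Sum>i=1..k. lap_eig n E i)"
proof -
  let ?l = "lap_eig n E"
  have split: "(\<Sum>j=1..n. ?l j) = (\<Sum>j=1..k. ?l j) + (\<Sum>j=k+1..n-1. ?l j) + ?l n"
  proof -
    have "(\<Sum>j=1..n. ?l j) = (\<Sum>j=1..n-1. ?l j) + ?l n"
      using k by (cases n) auto
    moreover have "(\<Sum>j=1..n-1. ?l j) = (\<Sum>j=1..k. ?l j) + (\<Sum>j=k+1..n-1. ?l j)"
      using sum.ub_add_nat[where m=1 and n=k and p="n - 1 - k" and g="?l"] k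
      by (simp add: le_add_diff_inverse)
    ultimately show ?thesis by simp
  qed
  have "(\<Sum>i=1..n-k-1. lap_eig n (compl_graph n E) i) = (\<Sum>i=1..n-k-1. real n - ?l (n - i))"
    by (intro sum.cong refl lap_eig_compl_graph[OF E]) auto
  also have "\<dots> = real n * real (n - k - 1) - (\<Sum>i=1..n-k-1. ?l (n - i))"
    by (simp add: sum_subtractf)
  also have "(\<Sum>i=1..n-k-1. ?l (n - i)) = (\<Sum>j=k+1..n-1. ?l j)"
    by (rule sum.reindex_bij_witness[where i="\<lambda>j. n - j" and j="\<lambda>i. n - i"]) auto
  finally show ?thesis
    using split sum_lap_eig[OF E] lap_eig_last[OF E] k by simp
qed

theorem lemma4:
  fixes n m k :: nat and G T :: "nat \<Rightarrow> nat \<Rightarrow> bool"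
  assumes "simple_graph n G" and "num_edges n G = m"
    and "1 \<le> k" and "k \<le> n - 1"
    and "threshold_graph n T" and "num_edges n T = m"
    and "(\<Sum>i=1..k. lap_eig n T i) \<ge> (\<Sum>i=1..k. lap_eig n G i)"
  shows "(\<Sum>i=1..n-k-1. lap_eig n (compl_graph n T) i)
           \<ge> (\<Sum>i=1..n-k-1. lap_eig n (compl_graph n G) i)
    \<and> (\<forall>T'. threshold_graph n T' \<and> num_edges n T' = m \<longrightarrow>
           (\<Sum>i=1..n-1. lap_eig n (compl_graph n T') i)
             = (\<Sum>i=1..n-1. lap_eig n (compl_graph n G) i))"
proof
  have k: "k < n" using assms(3,4) by linarith
  have "simple_graph n T" using assms(5) by (simp add: threshold_graph_def)
  then show "(\<Sum>i=1..n-k-1. lap_eig n (compl_graph n T) i)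
      \<ge> (\<Sum>i=1..n-k-1. lap_eig n (compl_graph n G) i)"
    using sum_lap_eig_compl_graph[OF _ k] assms(1,2,6,7) by simp
  show "\<forall>T'. threshold_graph n T' \<and> num_edges n T' = m \<longrightarrow>
      (\<Sum>i=1..n-1. lap_eig n (compl_graph n T') i) = (\<Sum>i=1..n-1. lap_eig n (compl_graph n G) i)"
    using sum_lap_eig_compl_graph[of n _ 0] k assms(1,2) by (auto simp: threshold_graph_def)
qed

end
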